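(* Let $G$ be a graph containing no cycle of length 6, let $x\in V(G)$, and let $(a,b,c)$ be a path on three distinct vertices in the induced subgraph $G[N_2(x)]$. Then there exists a vertex $v$ such that $\{v\}=N(x)\cap N(a)=N(x)\cap N(c)$.
   Context: All graphs are finite, simple and undirected; "containing no cycle of length 6" means having no subgraph (not necessarily induced) isomorphic to $C_6$. $N_i(S)$ denotes the set of vertices at distance exactly $i$ from the vertex set $S$, $N(S)=N_1(S)$, and $N(v)=N(\{v\})$, $N_2(v)=N_2(\{v\})$. *)

theory Defs
  imports Main
begin

definition simple_graph :: "'a set \<Rightarrow> ('a \<Rightarrow> 'a \<Rightarrow> bool) \<Rightarrow> bool" where
  "simple_graph V E \<longleftrightarrow> finite V \<and> (\<forall>x y. E x y \<longrightarrow> x \<in> V \<and> y \<in> V)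
     \<and> (\<forall>x y. E x y \<longrightarrow> E y x) \<and> (\<forall>x. \<not> E x x)"

definition walk_of_length :: "'a set \<Rightarrow> ('a \<Rightarrow> 'a \<Rightarrow> bool) \<Rightarrow> nat \<Rightarrow> 'a \<Rightarrow> 'a \<Rightarrow> bool" where
  "walk_of_length V E n s t \<longleftrightarrow> (\<exists>p :: nat \<Rightarrow> 'a. p 0 = s \<and> p n = t \<and>
     (\<forall>k\<le>n. p k \<in> V) \<and> (\<forall>k<n. E (p k) (p (Suc k))))"

definition nbhd_dist :: "'a set \<Rightarrow> ('a \<Rightarrow> 'a \<Rightarrow> bool) \<Rightarrow> nat \<Rightarrow> 'a set \<Rightarrow> 'a set" where
  "nbhd_dist V E i S = {y \<in> V. (\<exists>s\<in>S. walk_of_length V E i s y)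
      \<and> \<not> (\<exists>s\<in>S. \<exists>j<i. walk_of_length V E j s y)}"

definition nbhd :: "'a set \<Rightarrow> ('a \<Rightarrow> 'a \<Rightarrow> bool) \<Rightarrow> 'a \<Rightarrow> 'a set" where
  "nbhd V E v = nbhd_dist V E 1 {v}"

definition has_cycle_of_length :: "'a set \<Rightarrow> ('a \<Rightarrow> 'a \<Rightarrow> bool) \<Rightarrow> nat \<Rightarrow> bool" where
  "has_cycle_of_length V E k \<longleftrightarrow> (\<exists>f :: nat \<Rightarrow> 'a. inj_on f {0..<k} \<and> f ` {0..<k} \<subseteq> V
     \<and> (\<forall>i<k. E (f i) (f ((i + 1) mod k))))"

end

theory Submission
  imports Defs
begin

text \<open>If a and c had different neighbours u and w in N(x), then x, u, a, b, c, w would be a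
  6-cycle: the vertices are distinct because a, b, c lie at distance exactly 2 from x.\<close>

lemma walk_of_length_0_iff: "walk_of_length V E 0 s t \<longleftrightarrow> s = t \<and> s \<in> V"
  unfolding walk_of_length_def by auto

lemma walk_of_length_1_iff: "walk_of_length V E 1 s t \<longleftrightarrow> E s t \<and> s \<in> V \<and> t \<in> V"
proof
  assume "walk_of_length V E 1 s t"
  then show "E s t \<and> s \<in> V \<and> t \<in> V"
    unfolding walk_of_length_def by auto
next
  assume "E s t \<and> s \<in> V \<and> t \<in> V"
  then show "walk_of_length V E 1 s t"
    unfolding walk_of_length_def
    by (intro exI[of _ "\<lambda>k. if k = 0 then s else t"]) (auto simp: le_Suc_eq)
qed

lemma walk_of_length_2_midpoint:
  assumes "walk_of_length V E 2 s t"
  obtains m where "E s m" "E m t"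
proof -
  from assms obtain p where "p 0 = s" "p 2 = t" "\<forall>k<2. E (p k) (p (Suc k))"
    unfolding walk_of_length_def by blast
  then have "E s (p 1)" "E (p 1) t" by (auto simp: numeral_2_eq_2)
  then show thesis by (rule that)
qed

lemma nbhd_simple_graph:
  assumes "simple_graph V E"
  shows "nbhd V E v = {y. E v y}"
  using assms unfolding nbhd_def nbhd_dist_def simple_graph_def
  by (auto simp: walk_of_length_0_iff walk_of_length_1_iff[unfolded One_nat_def])

lemma nbhd_dist_2_singletonD:
  assumes "y \<in> nbhd_dist V E 2 {x}" and "x \<in> V"
  shows "\<exists>m. E x m \<and> E m y" and "\<not> E x y" and "y \<noteq> x"
proof -
  from assms(1) have walk: "walk_of_length V E 2 x y" and "y \<in> V"
    and no_shorter: "\<not> walk_of_length V E 0 x y" "\<not> walk_of_length V E 1 x y"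
    unfolding nbhd_dist_def by auto
  from walk show "\<exists>m. E x m \<and> E m y"
    by (elim walk_of_length_2_midpoint) blast
  show "\<not> E x y" "y \<noteq> x"
    using no_shorter \<open>y \<in> V\<close> assms(2)
    by (auto simp: walk_of_length_0_iff walk_of_length_1_iff[unfolded One_nat_def])
qed

lemma has_cycle_of_length_if_distinct_closed_walk:
  assumes "distinct xs" and "length xs = k" and "set xs \<subseteq> V"
    and "\<forall>i<k. E (xs ! i) (xs ! ((i + 1) mod k))"
  shows "has_cycle_of_length V E k"
  unfolding has_cycle_of_length_def
proof (intro exI[of _ "nth xs"] conjI)
  show "inj_on (nth xs) {0..<k}"
    using inj_on_nth[OF assms(1)] assms(2) by auto
  show "nth xs ` {0..<k} \<subseteq> V"
    using assms(2,3) nth_mem by fastforce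
qed (use assms(4) in blast)

lemma has_cycle_of_length_6I:
  assumes "distinct [v0, v1, v2, v3, v4, v5]" and "{v0, v1, v2, v3, v4, v5} \<subseteq> V"
    and "E v0 v1" "E v1 v2" "E v2 v3" "E v3 v4" "E v4 v5" "E v5 v0"
  shows "has_cycle_of_length V E 6"
proof (rule has_cycle_of_length_if_distinct_closed_walk[OF assms(1)])
  show "\<forall>i<6. E ([v0, v1, v2, v3, v4, v5] ! i) ([v0, v1, v2, v3, v4, v5] ! ((i + 1) mod 6))"
  proof (intro allI impI)
    fix i :: nat
    assume "i < 6"
    then have "i \<in> {0, 1, 2, 3, 4, 5}" by auto
    then show "E ([v0, v1, v2, v3, v4, v5] ! i) ([v0, v1, v2, v3, v4, v5] ! ((i + 1) mod 6))"
      using assms(3-8) by auto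
  qed
qed (use assms(2) in auto)

lemma C6_free_common_neighbour_unique:
  assumes "simple_graph V E" and "\<not> has_cycle_of_length V E 6" and "x \<in> V"
    and "a \<in> nbhd_dist V E 2 {x}" "b \<in> nbhd_dist V E 2 {x}" "c \<in> nbhd_dist V E 2 {x}"
    and "distinct [a, b, c]" and "E a b" "E b c"
    and "E x u" "E u a" and "E x w" "E w c"
  shows "u = w"
proof (rule ccontr)
  assume "u \<noteq> w"
  have graph: "\<And>p q. E p q \<Longrightarrow> p \<in> V \<and> q \<in> V" "\<And>p q. E p q \<Longrightarrow> E q p" "\<And>p. \<not> E p p"
    using assms(1) unfolding simple_graph_def by auto
  have "distinct [x, u, a, b, c, w]"
    using \<open>u \<noteq> w\<close> assms(7,10-13) graph
      nbhd_dist_2_singletonD[OF assms(4,3)] nbhd_dist_2_singletonD[OF assms(5,3)]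
      nbhd_dist_2_singletonD[OF assms(6,3)]
    by auto
  then have "has_cycle_of_length V E 6"
    by (rule has_cycle_of_length_6I) (use assms(8-13) graph in auto)
  with assms(2) show False ..
qed

theorem lemma2p1:
  fixes V :: "'a set" and E :: "'a \<Rightarrow> 'a \<Rightarrow> bool" and x a b c :: 'a
  assumes "simple_graph V E"
    and "\<not> has_cycle_of_length V E 6"
    and "x \<in> V"
    and "a \<in> nbhd_dist V E 2 {x}" and "b \<in> nbhd_dist V E 2 {x}" and "c \<in> nbhd_dist V E 2 {x}"
    and "a \<noteq> b" and "b \<noteq> c" and "a \<noteq> c"
    and "E a b" and "E b c"
  shows "\<exists>v. {v} = nbhd V E x \<inter> nbhd V E a \<and> {v} = nbhd V E x \<inter> nbhd V E c"
proof -
  have unique: "u = w" if "E x u" "E u a" "E x w" "E w c" for u w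
    using C6_free_common_neighbour_unique[OF assms(1-6) _ assms(10,11) that] assms(7-9)
    by simp
  obtain u where u: "E x u" "E u a"
    using nbhd_dist_2_singletonD(1)[OF assms(4,3)] by blast
  obtain w where w: "E x w" "E w c"
    using nbhd_dist_2_singletonD(1)[OF assms(6,3)] by blast
  have sym: "\<And>p q. E p q \<Longrightarrow> E q p"
    using assms(1) unfolding simple_graph_def by blast
  have "{u} = nbhd V E x \<inter> nbhd V E a" "{u} = nbhd V E x \<inter> nbhd V E c"
    using unique u w sym unfolding nbhd_simple_graph[OF assms(1)] by blast+
  then show ?thesis by blast
qed

end
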